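(* Let $\mathcal{X}_1,\mathcal{X}_2$ be non-empty sets, $\mathcal{B}_i\subseteq\mathcal{P}(\mathcal{X}_i)\setminus\{\emptyset\}$ and $\mathcal{D}_i$ a coherent set of desirable gambles on $\mathcal{X}_i$ for $i\in\{1,2\}$. Then $\mathcal{D}_1\otimes\mathcal{D}_2$ is a coherent set of desirable gambles on $\mathcal{X}_1\times\mathcal{X}_2$.
   Context: Gambles on a non-empty set $\mathcal{X}$ are bounded real functions; $\mathcal{G}(\mathcal{X})$ is the set of gambles, $\mathcal{G}_{>0}(\mathcal{X})$ the non-negative non-zero gambles, $\mathbb{I}_A$ the indicator of $A$. For $\mathcal{A}\subseteq\mathcal{G}(\mathcal{X})$: $\mathrm{posi}(\mathcal{A}):=\{\sum_{i=1}^n\lambda_if_i\colon n\in\mathbb{N},\lambda_i>0,f_i\in\mathcal{A}\}$, $\mathcal{E}(\mathcal{A}):=\mathrm{posi}(\mathcal{A}\cup\mathcal{G}_{>0}(\mathcal{X}))$. A coherent set of desirable gambles $\mathcal{D}\subseteq\mathcal{G}(\mathcal{X})$ satisfies, for all $f,g\in\mathcal{G}(\mathcal{X})$ and $\lambda>0$: (D1) $f\geq0,f\neq0\Rightarrow f\in\mathcal{D}$; (D2) $f\in\mathcal{D}\Rightarrow\lambda f\in\mathcal{D}$; (D3) $f,g\in\mathcal{D}\Rightarrow f+g\in\mathcal{D}$; (D4) $f\leq0\Rightarrow f\notin\mathcal{D}$. Gambles on $\mathcal{X}_i$ are identified with their cylindrical extensions to $\mathcal{X}_1\times\mathcal{X}_2$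 (e.g. $f(X_1)(x_1,x_2)=f(x_1)$), events $B\subseteq\mathcal{X}_1$ with $B\times\mathcal{X}_2$ (similarly for $\mathcal{X}_2$). $\mathcal{D}_1\otimes\mathcal{D}_2:=\mathcal{E}(\mathcal{A}_{1\to2}\cup\mathcal{A}_{2\to1})$ (with $\mathcal{E}$ taken on $\mathcal{X}_1\times\mathcal{X}_2$), where $\mathcal{A}_{1\to2}:=\{f_2(X_2)\mathbb{I}_{B_1}(X_1)\colon f_2\in\mathcal{D}_2,B_1\in\mathcal{B}_1\cup\{\mathcal{X}_1\}\}$ and $\mathcal{A}_{2\to1}:=\{f_1(X_1)\mathbb{I}_{B_2}(X_2)\colon f_1\in\mathcal{D}_1,B_2\in\mathcal{B}_2\cup\{\mathcal{X}_2\}\}$. *)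

theory Defs
  imports "HOL-Analysis.Analysis"
begin

text \<open>Possibility spaces are modelled as (automatically non-empty) types.
  Gambles are bounded real-valued functions on the type.\<close>

definition gambles :: "('x \<Rightarrow> real) set" where
  "gambles = {f. bounded (range f)}"

definition pos_gambles :: "('x \<Rightarrow> real) set" where
  "pos_gambles = {f \<in> gambles. (\<forall>x. f x \<ge> 0) \<and> f \<noteq> (\<lambda>x. 0)}"

definition posi :: "('x \<Rightarrow> real) set \<Rightarrow> ('x \<Rightarrow> real) set" where
  "posi A = {g. \<exists>n::nat. \<exists>lam f. n \<ge> 1 \<and> (\<forall>i<n. lam i > (0::real) \<and> f i \<in> A)
                  \<and> g = (\<lambda>x. \<Sum>i<n. lam i * f i x)}"

definition natext :: "('x \<Rightarrow> real) set \<Rightarrow> ('x \<Rightarrow> real) set" where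
  "natext A = posi (A \<union> pos_gambles)"

definition coherent :: "('x \<Rightarrow> real) set \<Rightarrow> bool" where
  "coherent D \<longleftrightarrow> D \<subseteq> gambles
     \<and> (\<forall>f \<in> gambles. (\<forall>x. f x \<ge> 0) \<and> f \<noteq> (\<lambda>x. 0) \<longrightarrow> f \<in> D)
     \<and> (\<forall>f \<in> D. \<forall>lam::real. lam > 0 \<longrightarrow> (\<lambda>x. lam * f x) \<in> D)
     \<and> (\<forall>f \<in> D. \<forall>g \<in> D. (\<lambda>x. f x + g x) \<in> D)
     \<and> (\<forall>f \<in> gambles. (\<forall>x. f x \<le> 0) \<longrightarrow> f \<notin> D)"

definition A12 :: "('y \<Rightarrow> real) set \<Rightarrow> 'x set set \<Rightarrow> ('x \<times> 'y \<Rightarrow> real) set" where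
  "A12 D2 B1 = {(\<lambda>(x1, x2). f2 x2 * indicator B x1) | f2 B. f2 \<in> D2 \<and> B \<in> B1 \<union> {UNIV}}"

definition A21 :: "('x \<Rightarrow> real) set \<Rightarrow> 'y set set \<Rightarrow> ('x \<times> 'y \<Rightarrow> real) set" where
  "A21 D1 B2 = {(\<lambda>(x1, x2). f1 x1 * indicator B x2) | f1 B. f1 \<in> D1 \<and> B \<in> B2 \<union> {UNIV}}"

definition indep_product ::
  "('x \<Rightarrow> real) set \<Rightarrow> 'x set set \<Rightarrow> ('y \<Rightarrow> real) set \<Rightarrow> 'y set set \<Rightarrow> ('x \<times> 'y \<Rightarrow> real) set" where
  "indep_product D1 B1 D2 B2 = natext (A12 D2 B1 \<union> A21 D1 B2)"

end

theory Submission
  imports Defs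
begin

text \<open>Suppose a positive combination of generators of \<open>D\<^sub>1 \<otimes> D\<^sub>2\<close> were nowhere positive.
  Dropping its non-negative part leaves a sum
  \<open>\<Sum>\<^sub>i a\<^sub>i(x\<^sub>2) 1\<^bsub>B\<^sub>i\<^esub>(x\<^sub>1) + \<Sum>\<^sub>j b\<^sub>j(x\<^sub>1) 1\<^bsub>C\<^sub>j\<^esub>(x\<^sub>2) \<le> 0\<close> with \<open>a\<^sub>i \<in> D\<^sub>2\<close>,
  \<open>b\<^sub>j \<in> D\<^sub>1\<close>. No non-trivial non-negative combination of the \<open>a\<^sub>i\<close> is nowhere positive, so
  Ville's theorem of the alternative provides finitely many points \<open>x\<^sub>2\<close> with weights
  \<open>c \<ge> 0\<close> under which every \<open>a\<^sub>i\<close> has positive mean. Averaging the sum over these points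
  gives \<open>\<Sum>\<^sub>i \<alpha>\<^sub>i 1\<^bsub>B\<^sub>i\<^esub>(x\<^sub>1) + \<Sum>\<^sub>j \<beta>\<^sub>j b\<^sub>j(x\<^sub>1)\<close> with \<open>\<alpha>\<^sub>i > 0\<close>, \<open>\<beta>\<^sub>j \<ge> 0\<close>, which is
  positive somewhere: by coherence of \<open>D\<^sub>1\<close> if some \<open>\<beta>\<^sub>j > 0\<close>, and on any (non-empty)
  \<open>B\<^sub>i\<close> otherwise. So the sum itself is positive at one of the chosen points.\<close>

inductive_set cone_span :: "('i \<Rightarrow> real) set \<Rightarrow> ('i \<Rightarrow> real) set" for W where
  zero: "(\<lambda>i. 0) \<in> cone_span W"
| add: "u \<in> cone_span W \<Longrightarrow> w \<in> W \<Longrightarrow> c \<ge> 0 \<Longrightarrow> (\<lambda>i. u i + c * w i) \<in> cone_span W"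

lemma cone_span_base: "w \<in> W \<Longrightarrow> w \<in> cone_span W"
  using cone_span.add[OF cone_span.zero, of w W 1] by simp

lemma cone_span_plus:
  assumes "u \<in> cone_span W" "v \<in> cone_span W"
  shows "(\<lambda>i. u i + v i) \<in> cone_span W"
  using assms(2)
proof (induction v rule: cone_span.induct)
  case zero
  show ?case using assms(1) by simp
next
  case (add v w c)
  then have "(\<lambda>i. (u i + v i) + c * w i) \<in> cone_span W"
    by (intro cone_span.add)
  then show ?case by (simp add: add.assoc)
qed

lemma cone_span_scale: "u \<in> cone_span W \<Longrightarrow> c \<ge> 0 \<Longrightarrow> (\<lambda>i. c * u i) \<in> cone_span W"
proof (induction u rule: cone_span.induct)
  case zero
  then show ?case by (simp add: cone_span.zero)
next
  case (add u w d)
  then have "(\<lambda>i. c * u i + (c * d) * w i) \<in> cone_span W"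
    by (intro cone_span.add) auto
  then show ?case by (simp add: algebra_simps)
qed

lemma cone_span_comb:
  "x \<in> W \<Longrightarrow> y \<in> W \<Longrightarrow> a \<ge> 0 \<Longrightarrow> b \<ge> 0 \<Longrightarrow> (\<lambda>i. a * x i + b * y i) \<in> cone_span W"
  using cone_span.add[OF cone_span.add[OF cone_span.zero], of x W a y b] by simp

lemma cone_span_subset: "W' \<subseteq> cone_span W \<Longrightarrow> cone_span W' \<subseteq> cone_span W"
proof
  fix u assume "W' \<subseteq> cone_span W" and "u \<in> cone_span W'"
  from this(2,1) show "u \<in> cone_span W"
    by (induction u rule: cone_span.induct)
      (auto intro!: cone_span.zero cone_span_plus cone_span_scale)
qed

lemma cone_span_coord_nonneg:
  "u \<in> cone_span W \<Longrightarrow> (\<And>w. w \<in> W \<Longrightarrow> w k \<ge> 0) \<Longrightarrow> u k \<ge> 0"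
  by (induction u rule: cone_span.induct) auto

lemma cone_span_range_sum:
  assumes "u \<in> cone_span (range v)"
  shows "\<exists>N::nat. \<exists>c pt. (\<forall>m<N. c m \<ge> 0) \<and> u = (\<lambda>i. \<Sum>m<N. c m * v (pt m) i)"
  using assms
proof (induction u rule: cone_span.induct)
  case zero
  show ?case by (intro exI[of _ "0::nat"]) simp
next
  case (add u w d)
  then obtain N :: nat and c pt x where u: "\<forall>m<N. c m \<ge> 0" "u = (\<lambda>i. \<Sum>m<N. c m * v (pt m) i)"
    and w: "w = v x"
    by blast
  define c' where "c' = c(N := d)"
  define pt' where "pt' = pt(N := x)"
  have "(\<Sum>m<N. c' m * v (pt' m) i) = (\<Sum>m<N. c m * v (pt m) i)" for i
    unfolding c'_def pt'_def by (rule sum.cong) auto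
  then have "(\<lambda>i. u i + d * w i) = (\<lambda>i. \<Sum>m<Suc N. c' m * v (pt' m) i)"
    using u w by (simp add: c'_def pt'_def)
  moreover have "\<forall>m<Suc N. c' m \<ge> 0"
    using u add.hyps(3) by (auto simp: c'_def less_Suc_eq)
  ultimately show ?case by blast
qed

lemma small_perturbation_pos:
  fixes u p :: "'i \<Rightarrow> real"
  assumes "finite S" "\<forall>i\<in>S. u i > 0"
  shows "\<exists>e>0. \<forall>i\<in>S. u i + e * p i > 0"
proof -
  have "\<forall>\<^sub>F e in at_right 0. \<forall>i\<in>S. u i + e * p i > 0"
  proof (rule eventually_ball_finite[OF assms(1)], intro ballI)
    fix i assume "i \<in> S"
    have "((\<lambda>e. u i + e * p i) \<longlongrightarrow> u i + 0 * p i) (at_right 0)"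
      by (intro tendsto_intros)
    then show "\<forall>\<^sub>F e in at_right 0. u i + e * p i > 0"
      using assms(2) \<open>i \<in> S\<close> by (auto dest: order_tendstoD(1))
  qed
  then have "\<forall>\<^sub>F e in at_right 0. e > 0 \<and> (\<forall>i\<in>S. u i + e * p i > 0)"
    using eventually_at_right_less by (rule eventually_conj[rotated])
  then show ?thesis
    using eventually_happens'[OF trivial_limit_at_right_real] by blast
qed

text \<open>One Fourier--Motzkin step: \<open>s\<close> is the supremum of \<open>g q / q k\<close> over the
  generators with \<open>q k > 0\<close>.\<close>

lemma cone_span_eliminate_coord:
  fixes g :: "('i \<Rightarrow> real) \<Rightarrow> real"
  assumes linear: "\<And>a b x y. g (\<lambda>i. a * x i + b * y i) = a * g x + b * g y"
    and nonpos: "\<And>u. u \<in> cone_span W \<Longrightarrow> u k \<ge> 0 \<Longrightarrow> g u \<le> 0"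
    and p: "p \<in> W" "p k > 0"
  shows "\<exists>s\<le>0. \<forall>w\<in>W. g w \<le> s * w k"
proof -
  define T where "T = {g q / q k | q. q \<in> W \<and> q k > 0}"
  have T_nonpos: "t \<le> 0" if "t \<in> T" for t
    using that nonpos[OF cone_span_base] by (auto simp: T_def divide_nonpos_pos)
  have "T \<noteq> {}" using p by (auto simp: T_def)
  have cross: "g w \<le> w k * (g q / q k)" if "w \<in> W" "w k \<le> 0" "q \<in> W" "q k > 0" for w q
  proof -
    \<comment> \<open>the combination below has vanishing \<open>k\<close>-th coordinate\<close>
    have "g (\<lambda>i. q k * w i + (- w k) * q i) \<le> 0"
      using that by (intro nonpos cone_span_comb) auto
    then have "q k * g w \<le> w k * g q" unfolding linear by simp
    then show ?thesis using \<open>q k > 0\<close> by (simp add: field_simps)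
  qed
  define s where "s = Sup T"
  have "s \<le> 0" unfolding s_def using \<open>T \<noteq> {}\<close> T_nonpos by (rule cSup_least)
  moreover have "g w \<le> s * w k" if "w \<in> W" for w
  proof -
    consider "w k > 0" | "w k = 0" | "w k < 0" by linarith
    then show ?thesis
    proof cases
      case 1
      then have "g w / w k \<le> s"
        unfolding s_def using that T_nonpos by (intro cSup_upper) (auto simp: T_def bdd_above_def)
      then show ?thesis using 1 by (simp add: divide_le_eq)
    next
      case 2
      then show ?thesis using cross[OF that _ p] by simp
    next
      case 3
      have "s \<le> g w / w k" unfolding s_def using \<open>T \<noteq> {}\<close>
      proof (rule cSup_least)
        fix t assume "t \<in> T"
        then obtain q where "q \<in> W" "q k > 0" "t = g q / q k" by (auto simp: T_def)
        then show "t \<le> g w / w k"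
          using cross[OF that _ \<open>q \<in> W\<close> \<open>q k > 0\<close>] 3 by (simp add: le_divide_eq mult.commute)
      qed
      then show ?thesis using 3 by (simp add: le_divide_eq)
    qed
  qed
  ultimately show ?thesis by blast
qed

lemma cone_span_extend_dual:
  fixes W :: "('i \<Rightarrow> real) set" and mu :: "'i \<Rightarrow> real"
  assumes "finite S" "k \<notin> S" and p: "p \<in> W" "p k > 0"
    and mu: "\<forall>i\<in>S. mu i \<ge> 0" "\<exists>i\<in>S. mu i > 0"
    and nonpos: "\<And>u. u \<in> cone_span W \<Longrightarrow> u k \<ge> 0 \<Longrightarrow> (\<Sum>i\<in>S. mu i * u i) \<le> 0"
  obtains l where "\<forall>i\<in>insert k S. l i \<ge> 0" "\<exists>i\<in>insert k S. l i > 0"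
    "\<forall>w\<in>W. (\<Sum>i\<in>insert k S. l i * w i) \<le> 0"
proof -
  obtain s where "s \<le> 0" and s: "\<forall>w\<in>W. (\<Sum>i\<in>S. mu i * w i) \<le> s * w k"
    using cone_span_eliminate_coord[of "\<lambda>w. \<Sum>i\<in>S. mu i * w i", OF _ nonpos p]
    by (auto simp: algebra_simps sum.distrib sum_distrib_left)
  define l where "l = mu(k := - s)"
  have "(\<Sum>i\<in>insert k S. l i * w i) = - s * w k + (\<Sum>i\<in>S. mu i * w i)" for w :: "'i \<Rightarrow> real"
  proof -
    have "(\<Sum>i\<in>S. l i * w i) = (\<Sum>i\<in>S. mu i * w i)"
      using assms(2) by (intro sum.cong) (auto simp: l_def)
    then show ?thesis using assms(1,2) by (simp add: l_def)
  qed
  with s have "\<forall>w\<in>W. (\<Sum>i\<in>insert k S. l i * w i) \<le> 0" by fastforce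
  moreover have "\<forall>i\<in>insert k S. l i \<ge> 0" "\<exists>i\<in>insert k S. l i > 0"
    using mu \<open>s \<le> 0\<close> assms(2) by (auto simp: l_def)
  ultimately show thesis using that by blast
qed

lemma ville_alternative:
  fixes W :: "('i \<Rightarrow> real) set"
  assumes "finite S"
    and "\<And>l. \<forall>i\<in>S. l i \<ge> 0 \<Longrightarrow> \<exists>i\<in>S. l i > 0 \<Longrightarrow> \<exists>w\<in>W. (\<Sum>i\<in>S. l i * w i) > 0"
  shows "\<exists>u\<in>cone_span W. \<forall>i\<in>S. u i > 0"
  using assms
proof (induction S arbitrary: W rule: finite_induct)
  case empty
  show ?case using cone_span.zero by blast
next
  case (insert k S W)
  obtain p where p: "p \<in> W" "p k > 0"
  proof -
    have "\<exists>w\<in>W. (\<Sum>i\<in>insert k S. (if i = k then 1 else 0) * w i) > 0"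
      by (rule insert.prems) auto
    moreover have "(\<Sum>i\<in>insert k S. (if i = k then 1 else 0) * w i) = w k" for w :: "'i \<Rightarrow> real"
      using insert.hyps(1) by (simp only: mult_if_delta) (simp add: sum.delta)
    ultimately show ?thesis using that by auto
  qed
  define W' where "W' = {u \<in> cone_span W. u k \<ge> 0}"
  show ?case
  proof (cases "\<exists>u\<in>cone_span W'. \<forall>i\<in>S. u i > 0")
    case True
    then obtain u where u: "u \<in> cone_span W'" "\<forall>i\<in>S. u i > 0" by blast
    have "u \<in> cone_span W" using cone_span_subset[of W' W] u(1) by (auto simp: W'_def)
    have "u k \<ge> 0" using u(1) by (rule cone_span_coord_nonneg) (simp add: W'_def)
    obtain e where e: "e > 0" "\<forall>i\<in>S. u i + e * p i > 0"
      using small_perturbation_pos[OF insert.hyps(1) u(2)] by blast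
    have "(\<lambda>i. u i + e * p i) \<in> cone_span W"
      using \<open>u \<in> cone_span W\<close> p e by (intro cone_span.add) auto
    moreover have "u k + e * p k > 0" using \<open>u k \<ge> 0\<close> e p by (simp add: add_nonneg_pos)
    ultimately show ?thesis using e by auto
  next
    case False
    then have "\<not> (\<forall>l. (\<forall>i\<in>S. l i \<ge> 0) \<longrightarrow> (\<exists>i\<in>S. l i > 0)
        \<longrightarrow> (\<exists>w\<in>W'. (\<Sum>i\<in>S. l i * w i) > 0))"
      using insert.IH[of W'] by blast
    then obtain mu where mu: "\<forall>i\<in>S. mu i \<ge> 0" "\<exists>i\<in>S. mu i > 0"
      and "\<forall>w\<in>W'. (\<Sum>i\<in>S. mu i * w i) \<le> 0"
      by (auto simp: not_less)
    then have "(\<Sum>i\<in>S. mu i * u i) \<le> 0" if "u \<in> cone_span W" "u k \<ge> 0" for u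
      using that by (auto simp: W'_def)
    then obtain l where "\<forall>i\<in>insert k S. l i \<ge> 0" "\<exists>i\<in>insert k S. l i > 0"
      and l: "\<forall>w\<in>W. (\<Sum>i\<in>insert k S. l i * w i) \<le> 0"
      by (rule cone_span_extend_dual[OF insert.hyps p mu])
    then obtain w where "w \<in> W" "(\<Sum>i\<in>insert k S. l i * w i) > 0"
      by (blast dest: insert.prems)
    with l show ?thesis by fastforce
  qed
qed

lemma posiE:
  assumes "g \<in> posi A"
  obtains K :: "nat set" and lam f where "finite K" "K \<noteq> {}"
    "\<forall>k\<in>K. lam k > 0 \<and> f k \<in> A" "g = (\<lambda>x. \<Sum>k\<in>K. lam k * f k x)"
proof -
  obtain n :: nat and lam f where "n \<ge> 1" "\<forall>i<n. lam i > 0 \<and> f i \<in> A"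
    "g = (\<lambda>x. \<Sum>i<n. lam i * f i x)"
    using assms unfolding posi_def by blast
  then show thesis by (intro that[of "{..<n}" lam f]) (auto simp: lessThan_empty_iff)
qed

lemma posi_sumI:
  fixes K :: "'k set"
  assumes "finite K" "K \<noteq> {}" "\<forall>k\<in>K. lam k > 0 \<and> f k \<in> A"
  shows "(\<lambda>x. \<Sum>k\<in>K. lam k * f k x) \<in> posi A"
proof -
  obtain h where h: "bij_betw h {..<card K} K"
    using ex_bij_betw_nat_finite[OF assms(1)] by (auto simp: atLeast0LessThan)
  have "(\<lambda>x. \<Sum>k\<in>K. lam k * f k x) = (\<lambda>x. \<Sum>i<card K. lam (h i) * f (h i) x)"
    by (rule ext, rule sum.reindex_bij_betw[OF h, symmetric])
  moreover have "\<forall>i<card K. lam (h i) > 0 \<and> f (h i) \<in> A"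
    using assms(3) bij_betw_apply[OF h] by auto
  moreover have "card K \<ge> 1" using assms(1,2) by (simp add: Suc_le_eq card_gt_0_iff)
  ultimately show ?thesis
    unfolding posi_def by (intro CollectI exI[of _ "card K"] exI[of _ "lam \<circ> h"] exI[of _ "f \<circ> h"]) simp
qed

lemma posi_base: "f \<in> A \<Longrightarrow> f \<in> posi A"
  using posi_sumI[of "{()}" "\<lambda>_. 1" "\<lambda>_. f" A] by simp

lemma posi_scale: "g \<in> posi A \<Longrightarrow> c > 0 \<Longrightarrow> (\<lambda>x. c * g x) \<in> posi A"
proof (elim posiE)
  fix K :: "nat set" and lam f
  assume K: "finite K" "K \<noteq> {}" "\<forall>k\<in>K. lam k > 0 \<and> f k \<in> A"
    and g: "g = (\<lambda>x. \<Sum>k\<in>K. lam k * f k x)" and "c > 0"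
  then have "(\<lambda>x. \<Sum>k\<in>K. (c * lam k) * f k x) \<in> posi A"
    by (intro posi_sumI) auto
  then show ?thesis by (simp add: g sum_distrib_left mult.assoc)
qed

lemma posi_add: "g \<in> posi A \<Longrightarrow> h \<in> posi A \<Longrightarrow> (\<lambda>x. g x + h x) \<in> posi A"
proof (elim posiE)
  fix K L :: "nat set" and lam mu f f'
  assume K: "finite K" "K \<noteq> {}" "\<forall>k\<in>K. lam k > 0 \<and> f k \<in> A" "g = (\<lambda>x. \<Sum>k\<in>K. lam k * f k x)"
    and L: "finite L" "L \<noteq> {}" "\<forall>k\<in>L. mu k > 0 \<and> f' k \<in> A" "h = (\<lambda>x. \<Sum>k\<in>L. mu k * f' k x)"
  have "(\<lambda>x. \<Sum>k\<in>K <+> L. case_sum lam mu k * case_sum f f' k x) \<in> posi A"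
    using K L by (intro posi_sumI) auto
  then show ?thesis using K L by (simp add: sum.Plus comp_def)
qed

lemma posi_least:
  assumes "A \<subseteq> C"
    and scale: "\<And>f c. f \<in> C \<Longrightarrow> c > 0 \<Longrightarrow> (\<lambda>x. c * f x) \<in> C"
    and add: "\<And>f g. f \<in> C \<Longrightarrow> g \<in> C \<Longrightarrow> (\<lambda>x. f x + g x) \<in> C"
  shows "posi A \<subseteq> C"
proof
  fix g assume "g \<in> posi A"
  then obtain K :: "nat set" and lam f where K: "finite K" "K \<noteq> {}"
    "\<forall>k\<in>K. lam k > 0 \<and> f k \<in> A" and g: "g = (\<lambda>x. \<Sum>k\<in>K. lam k * f k x)"
    by (rule posiE)
  have "(\<lambda>x. \<Sum>k\<in>K. lam k * f k x) \<in> C"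
    using K
  proof (induction K rule: finite_ne_induct)
    case (singleton k)
    then show ?case using assms(1) by (auto intro: scale)
  next
    case (insert k K)
    then show ?case using assms(1) by (auto intro!: add scale)
  qed
  then show "g \<in> C" by (simp add: g)
qed

lemma posi_UnE:
  assumes "g \<in> posi (A \<union> B)"
  obtains "g \<in> posi A" | "g \<in> posi B"
    | h k where "h \<in> posi A" "k \<in> posi B" "g = (\<lambda>x. h x + k x)"
proof -
  obtain K :: "nat set" and lam f where K: "finite K" "K \<noteq> {}"
    "\<forall>k\<in>K. lam k > 0 \<and> f k \<in> A \<union> B" and g: "g = (\<lambda>x. \<Sum>k\<in>K. lam k * f k x)"
    using assms by (rule posiE)
  define KA where "KA = {k \<in> K. f k \<in> A}"
  define KB where "KB = K - KA"
  have fin: "finite KA" "finite KB" using K(1) by (auto simp: KA_def KB_def)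
  have A: "(\<lambda>x. \<Sum>k\<in>KA. lam k * f k x) \<in> posi A" if "KA \<noteq> {}"
    using fin that K(3) by (intro posi_sumI) (auto simp: KA_def)
  have B: "(\<lambda>x. \<Sum>k\<in>KB. lam k * f k x) \<in> posi B" if "KB \<noteq> {}"
    using fin that K(3) by (intro posi_sumI) (auto simp: KA_def KB_def)
  have "K = KA \<union> KB" "KA \<inter> KB = {}" by (auto simp: KA_def KB_def)
  then have split: "g = (\<lambda>x. (\<Sum>k\<in>KA. lam k * f k x) + (\<Sum>k\<in>KB. lam k * f k x))"
    unfolding g using fin by (simp add: sum.union_disjoint)
  consider "KB = {}" | "KA = {}" | "KA \<noteq> {}" "KB \<noteq> {}" by blast
  then show thesis
    using A B that split K(2) \<open>K = KA \<union> KB\<close> by cases auto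
qed

lemma gambles_add: "f \<in> gambles \<Longrightarrow> g \<in> gambles \<Longrightarrow> (\<lambda>x. f x + g x) \<in> gambles"
  unfolding gambles_def by (simp add: bounded_plus_comp)

lemma gambles_scale: "f \<in> gambles \<Longrightarrow> (\<lambda>x. c * f x) \<in> gambles"
  unfolding gambles_def using bounded_scaleR_comp[of f UNIV c] by simp

lemma gambles_mult_indicator:
  assumes "f \<in> gambles"
  shows "(\<lambda>z. f (p z) * indicator B (q z)) \<in> gambles"
proof -
  obtain M where M: "\<forall>y. \<bar>f y\<bar> \<le> M"
    using assms unfolding gambles_def bounded_iff by auto
  have "\<bar>f (p z) * indicator B (q z)\<bar> \<le> M" for z
    using M[rule_format, of "p z"] by (auto simp: indicator_def)
  then show ?thesis unfolding gambles_def bounded_iff by auto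
qed

lemma A12_eq: "A12 D2 B1 = {(\<lambda>z. f (snd z) * indicator B (fst z)) | f B. f \<in> D2 \<and> B \<in> B1 \<union> {UNIV}}"
  by (simp add: A12_def case_prod_unfold)

lemma A21_eq: "A21 D1 B2 = {(\<lambda>z. f (fst z) * indicator B (snd z)) | f B. f \<in> D1 \<and> B \<in> B2 \<union> {UNIV}}"
  by (simp add: A21_def case_prod_unfold)

lemma pos_gambles_has_pos: "f \<in> pos_gambles \<Longrightarrow> \<exists>x. f x > 0"
  by (auto simp: pos_gambles_def fun_eq_iff less_le)

lemma posi_pos_gambles: "posi pos_gambles \<subseteq> pos_gambles"
proof (rule posi_least)
  fix f :: "'a \<Rightarrow> real" and c :: real
  assume "f \<in> pos_gambles" "c > 0"
  then show "(\<lambda>x. c * f x) \<in> pos_gambles"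
    by (auto simp: pos_gambles_def gambles_scale fun_eq_iff)
next
  fix f g :: "'a \<Rightarrow> real"
  assume f: "f \<in> pos_gambles" and g: "g \<in> pos_gambles"
  then obtain x where "f x > 0" using pos_gambles_has_pos by blast
  with f g show "(\<lambda>x. f x + g x) \<in> pos_gambles"
    by (auto simp: pos_gambles_def gambles_add fun_eq_iff add_pos_nonneg intro!: exI[of _ x]
        dest!: spec[of _ x] less_imp_neq[symmetric])
qed simp

lemma coherent_subset_gambles: "coherent D \<Longrightarrow> D \<subseteq> gambles"
  unfolding coherent_def by blast

lemma coherent_scale: "coherent D \<Longrightarrow> f \<in> D \<Longrightarrow> c > 0 \<Longrightarrow> (\<lambda>x. c * f x) \<in> D"
  unfolding coherent_def by blast

lemma coherent_add: "coherent D \<Longrightarrow> f \<in> D \<Longrightarrow> g \<in> D \<Longrightarrow> (\<lambda>x. f x + g x) \<in> D"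
  unfolding coherent_def by blast

lemma coherent_has_pos:
  assumes "coherent D" "f \<in> D"
  shows "\<exists>x. f x > 0"
proof (rule ccontr)
  assume "\<nexists>x. f x > 0"
  then have "\<forall>x. f x \<le> 0" by (simp add: not_less)
  with assms show False unfolding coherent_def by blast
qed

lemma coherent_sum:
  assumes "coherent D" "finite S" "\<forall>k\<in>S. c k \<ge> 0 \<and> a k \<in> D" "\<exists>k\<in>S. c k > 0"
  shows "(\<lambda>x. \<Sum>k\<in>S. c k * a k x) \<in> D"
proof -
  define S' where "S' = {k \<in> S. c k > 0}"
  have "(\<lambda>x. \<Sum>k\<in>S'. c k * a k x) \<in> posi D"
    using assms(2-4) by (intro posi_sumI) (auto simp: S'_def)
  also have "posi D \<subseteq> D"
    using coherent_scale[OF assms(1)] coherent_add[OF assms(1)] by (intro posi_least) auto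
  finally have "(\<lambda>x. \<Sum>k\<in>S'. c k * a k x) \<in> D" .
  moreover have "(\<Sum>k\<in>S. c k * a k x) = (\<Sum>k\<in>S'. c k * a k x)" for x
    using assms(2,3) by (intro sum.mono_neutral_right) (auto simp: S'_def)
  ultimately show ?thesis by simp
qed

lemma coherent_positive_mixture:
  fixes \<phi> :: "'i \<Rightarrow> 'x \<Rightarrow> real"
  assumes "coherent D" "finite I" "\<forall>i\<in>I. \<phi> i \<in> D"
  obtains N :: nat and c pt where "\<forall>m<N. c m \<ge> 0" "\<forall>i\<in>I. (\<Sum>m<N. c m * \<phi> i (pt m)) > 0"
proof -
  have "\<exists>u\<in>cone_span (range (\<lambda>x i. \<phi> i x)). \<forall>i\<in>I. u i > 0"
  proof (rule ville_alternative[OF assms(2)])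
    fix l :: "'i \<Rightarrow> real"
    assume "\<forall>i\<in>I. l i \<ge> 0" "\<exists>i\<in>I. l i > 0"
    then have "(\<lambda>x. \<Sum>i\<in>I. l i * \<phi> i x) \<in> D"
      using assms by (intro coherent_sum) auto
    then obtain x where "(\<Sum>i\<in>I. l i * \<phi> i x) > 0"
      using coherent_has_pos[OF assms(1)] by blast
    then show "\<exists>w\<in>range (\<lambda>x i. \<phi> i x). (\<Sum>i\<in>I. l i * w i) > 0" by auto
  qed
  then obtain u where u: "u \<in> cone_span (range (\<lambda>x i. \<phi> i x))" "\<forall>i\<in>I. u i > 0" by blast
  obtain N :: nat and c pt where "\<forall>m<N. c m \<ge> 0" "u = (\<lambda>i. \<Sum>m<N. c m * \<phi> i (pt m))"
    using cone_span_range_sum[OF u(1)] by blast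
  with u(2) show thesis by (intro that) auto
qed

lemma posi_product_form:
  assumes "coherent D"
    and "A \<subseteq> {(\<lambda>z. f (p z) * indicator B (q z)) | f B. f \<in> D \<and> B \<in> \<B>}"
    and "h \<in> posi A"
  obtains K :: "nat set" and f B where "finite K" "K \<noteq> {}" "\<forall>k\<in>K. f k \<in> D \<and> B k \<in> \<B>"
    "h = (\<lambda>z. \<Sum>k\<in>K. f k (p z) * indicator (B k) (q z))"
proof -
  obtain K :: "nat set" and lam g where K: "finite K" "K \<noteq> {}" "\<forall>k\<in>K. lam k > 0 \<and> g k \<in> A"
    and h: "h = (\<lambda>z. \<Sum>k\<in>K. lam k * g k z)"
    using assms(3) by (rule posiE)
  have "\<forall>k\<in>K. \<exists>f B. f \<in> D \<and> B \<in> \<B> \<and> g k = (\<lambda>z. f (p z) * indicator B (q z))"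
    using K(3) assms(2) by blast
  then have "\<exists>f. \<forall>k\<in>K. \<exists>B. f k \<in> D \<and> B \<in> \<B> \<and> g k = (\<lambda>z. f k (p z) * indicator B (q z))"
    by (rule bchoice)
  then obtain f where "\<forall>k\<in>K. \<exists>B. f k \<in> D \<and> B \<in> \<B> \<and> g k = (\<lambda>z. f k (p z) * indicator B (q z))" ..
  then have "\<exists>B. \<forall>k\<in>K. f k \<in> D \<and> B k \<in> \<B> \<and> g k = (\<lambda>z. f k (p z) * indicator (B k) (q z))"
    by (rule bchoice)
  then obtain B where fB: "\<forall>k\<in>K. f k \<in> D \<and> B k \<in> \<B> \<and> g k = (\<lambda>z. f k (p z) * indicator (B k) (q z))" ..
  show thesis
  proof (rule that[of K "\<lambda>k y. lam k * f k y" B])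
    show "\<forall>k\<in>K. (\<lambda>y. lam k * f k y) \<in> D \<and> B k \<in> \<B>"
      using K(3) fB coherent_scale[OF assms(1)] by blast
    show "h = (\<lambda>z. \<Sum>k\<in>K. lam k * f k (p z) * indicator (B k) (q z))"
      unfolding h using fB by (auto intro!: sum.cong)
  qed (use K in auto)
qed

lemma weighted_sum_pos_imp_pos:
  fixes c h :: "nat \<Rightarrow> real"
  assumes "\<forall>m<N. c m \<ge> 0" "(\<Sum>m<N. c m * h m) > 0"
  shows "\<exists>m<N. h m > 0"
proof (rule ccontr)
  assume "\<not> (\<exists>m<N. h m > 0)"
  then have "\<forall>m<N. h m \<le> 0" using not_le by blast
  then have "(\<Sum>m<N. c m * h m) \<le> 0"
    using assms(1) by (intro sum_nonpos mult_nonneg_nonpos) auto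
  with assms(2) show False by simp
qed

lemma coherent_indicator_sum_has_pos:
  assumes "coherent D" "finite I" "finite J" "I \<noteq> {}"
    and "\<forall>i\<in>I. \<alpha> i > 0 \<and> B i \<noteq> {}" "\<forall>j\<in>J. \<beta> j \<ge> 0 \<and> b j \<in> D"
  shows "\<exists>x. (\<Sum>i\<in>I. indicator (B i) x * \<alpha> i) + (\<Sum>j\<in>J. \<beta> j * b j x) > 0"
proof (cases "\<exists>j\<in>J. \<beta> j > 0")
  case True
  then have "(\<lambda>x. \<Sum>j\<in>J. \<beta> j * b j x) \<in> D"
    using assms(3,6) by (intro coherent_sum[OF assms(1)]) auto
  then obtain x where "(\<Sum>j\<in>J. \<beta> j * b j x) > 0"
    using coherent_has_pos[OF assms(1)] by blast
  moreover have "(\<Sum>i\<in>I. indicator (B i) x * \<alpha> i) \<ge> 0"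
    using assms(5) by (intro sum_nonneg) auto
  ultimately show ?thesis by (intro exI[of _ x]) linarith
next
  case False
  then have "(\<Sum>j\<in>J. \<beta> j * b j x) = 0" for x
    using assms(6) by (intro sum.neutral) (auto simp: not_less order.antisym)
  moreover obtain i0 x where "i0 \<in> I" "x \<in> B i0"
    using assms(4,5) by blast
  moreover have "indicator (B i0) x * \<alpha> i0 \<le> (\<Sum>i\<in>I. indicator (B i) x * \<alpha> i)"
    using \<open>i0 \<in> I\<close> assms(2,5) by (intro member_le_sum) auto
  ultimately show ?thesis
    using assms(5) by (intro exI[of _ x]) fastforce
qed

lemma coherent_product_sum_has_pos:
  fixes a :: "'i \<Rightarrow> 'y \<Rightarrow> real" and b :: "'j \<Rightarrow> 'x \<Rightarrow> real"
  assumes D1: "coherent D1" and D2: "coherent D2"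
    and fin: "finite I" "finite J" and ne: "I \<noteq> {} \<or> J \<noteq> {}"
    and a: "\<forall>i\<in>I. a i \<in> D2 \<and> B i \<noteq> {}" and b: "\<forall>j\<in>J. b j \<in> D1 \<and> C j \<noteq> {}"
  shows "\<exists>x1 x2. (\<Sum>i\<in>I. a i x2 * indicator (B i) x1) + (\<Sum>j\<in>J. b j x1 * indicator (C j) x2) > 0"
proof -
  define H where "H x1 x2 = (\<Sum>i\<in>I. a i x2 * indicator (B i) x1) + (\<Sum>j\<in>J. b j x1 * indicator (C j) x2)"
    for x1 x2
  have "\<exists>x1 x2. H x1 x2 > 0"
  proof (cases "I = {}")
    case True
    then obtain j0 x2 where "j0 \<in> J" "x2 \<in> C j0" using ne b by blast
    then have "(\<lambda>x1. \<Sum>j\<in>J. indicator (C j) x2 * b j x1) \<in> D1"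
      using fin b by (intro coherent_sum[OF D1]) (auto intro!: bexI[of _ j0])
    then obtain x1 where "(\<Sum>j\<in>J. indicator (C j) x2 * b j x1) > 0"
      using coherent_has_pos[OF D1] by blast
    then have "H x1 x2 > 0" using True by (simp add: H_def mult.commute)
    then show ?thesis by blast
  next
    case False
    obtain N :: nat and c pt where c: "\<forall>m<N. c m \<ge> 0"
      and \<alpha>: "\<forall>i\<in>I. (\<Sum>m<N. c m * a i (pt m)) > 0"
      using coherent_positive_mixture[OF D2 fin(1)] a by blast
    define \<beta> where "\<beta> j = (\<Sum>m<N. c m * indicator (C j) (pt m))" for j
    have "\<beta> j \<ge> 0" for j
      using c by (auto simp: \<beta>_def intro!: sum_nonneg)
    then have "\<forall>j\<in>J. \<beta> j \<ge> 0 \<and> b j \<in> D1" using b by blast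
    moreover have "\<forall>i\<in>I. (\<Sum>m<N. c m * a i (pt m)) > 0 \<and> B i \<noteq> {}" using \<alpha> a by blast
    ultimately obtain x1 where "(\<Sum>i\<in>I. indicator (B i) x1 * (\<Sum>m<N. c m * a i (pt m)))
        + (\<Sum>j\<in>J. \<beta> j * b j x1) > 0"
      using coherent_indicator_sum_has_pos[OF D1 fin False,
          where \<alpha> = "\<lambda>i. \<Sum>m<N. c m * a i (pt m)" and \<beta> = \<beta>] by blast
    also have "(\<Sum>i\<in>I. indicator (B i) x1 * (\<Sum>m<N. c m * a i (pt m))) + (\<Sum>j\<in>J. \<beta> j * b j x1)
        = (\<Sum>i\<in>I. \<Sum>m<N. indicator (B i) x1 * (c m * a i (pt m)))
          + (\<Sum>j\<in>J. \<Sum>m<N. (c m * indicator (C j) (pt m)) * b j x1)"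
      by (simp only: \<beta>_def sum_distrib_left sum_distrib_right)
    also have "\<dots> = (\<Sum>m<N. \<Sum>i\<in>I. indicator (B i) x1 * (c m * a i (pt m)))
          + (\<Sum>m<N. \<Sum>j\<in>J. (c m * indicator (C j) (pt m)) * b j x1)"
      by (simp only: sum.swap[of _ "{..<N}"])
    also have "\<dots> = (\<Sum>m<N. c m * H x1 (pt m))"
      by (simp add: H_def distrib_left sum.distrib sum_distrib_left mult_ac)
    finally obtain m where "H x1 (pt m) > 0"
      using weighted_sum_pos_imp_pos[OF c, of "\<lambda>m. H x1 (pt m)"] by blast
    then show ?thesis by blast
  qed
  then show ?thesis by (simp add: H_def)
qed

lemma posi_A12_A21_has_pos:
  fixes D1 :: "('x \<Rightarrow> real) set" and D2 :: "('y \<Rightarrow> real) set"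
  assumes "{} \<notin> B1" "{} \<notin> B2" and D1: "coherent D1" and D2: "coherent D2"
    and "h \<in> posi (A12 D2 B1 \<union> A21 D1 B2)"
  shows "\<exists>z. h z > 0"
proof -
  have A12: "A12 D2 B1 \<subseteq> {(\<lambda>z. f (snd z) * indicator B (fst z)) | f B. f \<in> D2 \<and> B \<in> B1 \<union> {UNIV}}"
    and A21: "A21 D1 B2 \<subseteq> {(\<lambda>z. f (fst z) * indicator B (snd z)) | f B. f \<in> D1 \<and> B \<in> B2 \<union> {UNIV}}"
    by (simp_all add: A12_eq A21_eq)
  have ne1: "B \<in> B1 \<union> {UNIV} \<Longrightarrow> B \<noteq> {}" and ne2: "C \<in> B2 \<union> {UNIV} \<Longrightarrow> C \<noteq> {}" for B C
    using assms(1,2) by auto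
  note core = coherent_product_sum_has_pos[OF D1 D2]
  from assms(5) show ?thesis
  proof (cases rule: posi_UnE)
    case 1
    then obtain I :: "nat set" and a B where "finite I" "I \<noteq> {}" "\<forall>i\<in>I. a i \<in> D2 \<and> B i \<in> B1 \<union> {UNIV}"
      and h: "h = (\<lambda>z. \<Sum>i\<in>I. a i (snd z) * indicator (B i) (fst z))"
      by (rule posi_product_form[OF D2 A12])
    then show ?thesis
      using core[of I "{} :: nat set" a B] ne1 by (auto simp: h)
  next
    case 2
    then obtain J :: "nat set" and b C where "finite J" "J \<noteq> {}" "\<forall>j\<in>J. b j \<in> D1 \<and> C j \<in> B2 \<union> {UNIV}"
      and h: "h = (\<lambda>z. \<Sum>j\<in>J. b j (fst z) * indicator (C j) (snd z))"
      by (rule posi_product_form[OF D1 A21])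
    then show ?thesis
      using core[of "{} :: nat set" J _ _ b C] ne2 by (auto simp: h)
  next
    case (3 h1 h2)
    obtain I :: "nat set" and a B where "finite I" "I \<noteq> {}" "\<forall>i\<in>I. a i \<in> D2 \<and> B i \<in> B1 \<union> {UNIV}"
      and h1: "h1 = (\<lambda>z. \<Sum>i\<in>I. a i (snd z) * indicator (B i) (fst z))"
      using 3(1) by (rule posi_product_form[OF D2 A12])
    moreover obtain J :: "nat set" and b C where "finite J" "\<forall>j\<in>J. b j \<in> D1 \<and> C j \<in> B2 \<union> {UNIV}"
      and h2: "h2 = (\<lambda>z. \<Sum>j\<in>J. b j (fst z) * indicator (C j) (snd z))"
      using 3(2) by (rule posi_product_form[OF D1 A21])
    ultimately show ?thesis
      using core[of I J a B b C] ne1 ne2 by (auto simp: 3(3) h1 h2)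
  qed
qed

lemma indep_product_has_pos:
  assumes "{} \<notin> B1" "{} \<notin> B2" "coherent D1" "coherent D2"
    and "g \<in> indep_product D1 B1 D2 B2"
  shows "\<exists>z. g z > 0"
proof -
  have "g \<in> posi ((A12 D2 B1 \<union> A21 D1 B2) \<union> pos_gambles)"
    using assms(5) by (simp add: indep_product_def natext_def)
  then show ?thesis
  proof (cases rule: posi_UnE)
    case 1
    then show ?thesis by (rule posi_A12_A21_has_pos[OF assms(1-4)])
  next
    case 2
    then show ?thesis using posi_pos_gambles pos_gambles_has_pos by blast
  next
    case (3 h p)
    obtain z where "h z > 0" using posi_A12_A21_has_pos[OF assms(1-4) 3(1)] ..
    moreover have "p \<in> pos_gambles" using 3(2) posi_pos_gambles by blast
    then have "p z \<ge> 0" unfolding pos_gambles_def by blast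
    ultimately have "g z > 0" by (simp add: 3(3))
    then show ?thesis ..
  qed
qed

theorem proposition39:
  fixes D1 :: "('x \<Rightarrow> real) set" and D2 :: "('y \<Rightarrow> real) set"
    and B1 :: "'x set set" and B2 :: "'y set set"
  assumes "{} \<notin> B1" and "{} \<notin> B2"
    and "coherent D1" and "coherent D2"
  shows "coherent (indep_product D1 B1 D2 B2)"
proof -
  let ?A = "A12 D2 B1 \<union> A21 D1 B2 \<union> pos_gambles"
  have P: "indep_product D1 B1 D2 B2 = posi ?A"
    by (simp add: indep_product_def natext_def)
  have "?A \<subseteq> gambles"
    using coherent_subset_gambles[OF assms(3)] coherent_subset_gambles[OF assms(4)]
    by (auto simp: A12_eq A21_eq pos_gambles_def intro: gambles_mult_indicator)
  then have "posi ?A \<subseteq> gambles"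
    by (rule posi_least) (auto intro: gambles_scale gambles_add)
  moreover have "f \<in> posi ?A" if "f \<in> gambles" "\<forall>x. f x \<ge> 0" "f \<noteq> (\<lambda>x. 0)" for f
    using that by (intro posi_base) (simp add: pos_gambles_def)
  moreover have "f \<notin> posi ?A" if "\<forall>x. f x \<le> 0" for f
    using that indep_product_has_pos[OF assms] unfolding P by (meson not_le)
  ultimately show ?thesis
    unfolding coherent_def P by (blast intro: posi_scale posi_add)
qed

end
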